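(* Under the assumptions (i), (ii), (iii) of the Main Result (including convexity of $L_T$), any point $\hat\theta_T$ with $\nabla L_T(\hat\theta_T)=0$ lies in $\mathcal{B}=\{\hat\theta_T^{\mathrm{NS}}+e:\|e\|_\Sigma\le r\}$.
   Context: Setting: $\ell_1,\dots,\ell_n:\mathbb{R}^d\to\mathbb{R}$ twice continuously differentiable, $T\subseteq[n]$, $L_T=\sum_{i\notin T}\ell_i$ convex, $\hat\theta$ with $\sum_{i=1}^n\nabla\ell_i(\hat\theta)=0$, $H_\theta=\nabla^2L_T(\theta)$, $g=\nabla L_T(\hat\theta)$, $H=H_{\hat\theta}$ invertible, $\hat\theta_T^{\mathrm{NS}}=\hat\theta-H^{-1}g$; $\Sigma$ positive definite, $\|v\|_M=\sqrt{v^\top Mv}$, $r>0$. (i): $\|\Sigma^{1/2}H_\theta^{-1}\Sigma^{1/2}\|_{\mathrm{op}}\le C_{\mathrm{op}}$ for all $\theta\in\mathcal B$. (ii): $\|(H_\theta-H)H^{-1}g\|_{\Sigma^{-1}}\le C_h$ for all $\theta$ on the segment $[\hat\theta,\hat\theta_T^{\mathrm{NS}}]$. (iii): $C_hC_{\mathrm{op}}<r$. *)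

theory Defs
  imports "HOL-Analysis.Analysis"
begin

definition grad :: "(real^'d \<Rightarrow> real) \<Rightarrow> real^'d \<Rightarrow> real^'d" where
  "grad f x = (\<chi> i. frechet_derivative f (at x) (axis i 1))"

definition hess :: "(real^'d \<Rightarrow> real) \<Rightarrow> real^'d \<Rightarrow> real^'d^'d" where
  "hess f x = jacobian (grad f) (at x)"

definition C2 :: "(real^'d \<Rightarrow> real) \<Rightarrow> bool" where
  "C2 f \<longleftrightarrow> (\<forall>x. f differentiable (at x)) \<and> (\<forall>x. grad f differentiable (at x))
              \<and> continuous_on UNIV (hess f)"

definition sym_mat :: "real^'d^'d \<Rightarrow> bool" where
  "sym_mat A \<longleftrightarrow> transpose A = A"

definition pos_def :: "real^'d^'d \<Rightarrow> bool" where
  "pos_def A \<longleftrightarrow> sym_mat A \<and> (\<forall>v. v \<noteq> 0 \<longrightarrow> v \<bullet> (A *v v) > 0)"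

definition pos_semidef :: "real^'d^'d \<Rightarrow> bool" where
  "pos_semidef A \<longleftrightarrow> sym_mat A \<and> (\<forall>v. v \<bullet> (A *v v) \<ge> 0)"

definition mat_sqrt :: "real^'d^'d \<Rightarrow> real^'d^'d" where
  "mat_sqrt A = (THE R. pos_semidef R \<and> R ** R = A)"

definition mnorm :: "real^'d^'d \<Rightarrow> real^'d \<Rightarrow> real" where
  "mnorm M v = sqrt (v \<bullet> (M *v v))"

definition op_norm :: "real^'d^'d \<Rightarrow> real" where
  "op_norm A = onorm (\<lambda>v. A *v v)"

end

theory Submission
  imports Defs
begin

text \<open>
  Write \<open>G\<close> and \<open>M\<close> for the gradient and the Hessian of \<open>L\<^sub>T\<close>, and let \<open>e\<close> lie on the
  \<open>\<Sigma>\<close>-sphere \<open>\<parallel>e\<parallel>\<^sub>\<Sigma> = r\<close>. The mean value theorem on \<open>[\<theta>hat, \<theta>NS]\<close> together with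
  \<open>H (\<theta>NS - \<theta>hat) = -g\<close> writes \<open>\<langle>G \<theta>NS, e\<rangle>\<close> as \<open>-\<langle>(M \<xi> - H) H\<^sup>-\<^sup>1 g, e\<rangle>\<close>, which is at least
  \<open>-C\<^sub>h r\<close> by (ii) and the Cauchy--Schwarz inequality for the pair of dual norms given by
  \<open>\<Sigma>\<close> and \<open>\<Sigma>\<^sup>-\<^sup>1\<close>. Condition (i) says \<open>\<Sigma> \<le> C\<^sub>o\<^sub>p M\<close> as quadratic forms on \<open>B\<close>, so along
  \<open>[\<theta>NS, \<theta>NS + e]\<close> the function \<open>\<langle>G, e\<rangle>\<close> increases by at least \<open>r\<^sup>2 / C\<^sub>o\<^sub>p > C\<^sub>h r\<close>
  by (iii). Hence \<open>\<langle>G (\<theta>NS + e), e\<rangle> > 0\<close> on the whole sphere. Convexity makes \<open>G\<close> monotone,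
  and a monotone field pointing outwards on the boundary of an ellipsoid has no zero outside it:
  comparing a zero \<open>\<theta>T \<notin> B\<close> with the boundary point on the segment \<open>[\<theta>NS, \<theta>T]\<close> would
  force \<open>\<langle>G, e\<rangle> \<le> 0\<close> there.

  Turning (i) into \<open>\<Sigma> \<le> C\<^sub>o\<^sub>p M\<close> needs the symmetry of the Hessian (Schwarz's theorem), its
  semidefiniteness (convexity) and the square root \<open>\<Sigma>\<^sup>1\<^sup>/\<^sup>2\<close>, which is built on an orthonormal
  eigenbasis obtained by maximising the Rayleigh quotient.
\<close>

section \<open>Symmetric and positive definite matrices\<close>

lemma sym_mat_iff_inner:
  fixes M :: "real^'d^'d"
  shows "sym_mat M \<longleftrightarrow> (\<forall>x y. (M *v x) \<bullet> y = x \<bullet> (M *v y))"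
proof
  assume "sym_mat M"
  then show "\<forall>x y. (M *v x) \<bullet> y = x \<bullet> (M *v y)"
    unfolding sym_mat_def by (metis dot_lmul_matrix vector_transpose_matrix)
next
  assume M: "\<forall>x y. (M *v x) \<bullet> y = x \<bullet> (M *v y)"
  have "(transpose M *v x - M *v x) \<bullet> y = 0" for x y
    using M by (metis dot_lmul_matrix inner_diff_left right_minus_eq transpose_matrix_vector)
  then show "sym_mat M"
    unfolding sym_mat_def matrix_eq by (metis inner_eq_zero_iff right_minus_eq)
qed

lemma sym_matD: "sym_mat M \<Longrightarrow> (M *v x) \<bullet> y = x \<bullet> (M *v y)"
  for M :: "real^'d^'d"
  by (simp add: sym_mat_iff_inner)

lemma
  fixes H :: "'a::field^'n^'n"
  assumes "invertible H"
  shows matrix_inv_cancel_left: "H *v (matrix_inv H *v x) = x"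
    and matrix_inv_cancel_right: "matrix_inv H *v (H *v x) = x"
proof -
  have "H ** matrix_inv H = mat 1 \<and> matrix_inv H ** H = mat 1"
    using assms unfolding invertible_def matrix_inv_def by (rule someI_ex)
  then show "H *v (matrix_inv H *v x) = x" "matrix_inv H *v (H *v x) = x"
    by (simp_all add: matrix_vector_mul_assoc)
qed

lemma pos_def_imp_pos_semidef: "pos_def A \<Longrightarrow> pos_semidef A"
  unfolding pos_def_def pos_semidef_def by (metis inner_zero_left less_eq_real_def)

lemma pos_def_invertible:
  fixes A :: "real^'d^'d"
  assumes "pos_def A"
  shows "invertible A"
proof -
  have "A *v x = 0 \<Longrightarrow> x = 0" for x
    using assms unfolding pos_def_def by (metis inner_zero_right less_irrefl)
  then show ?thesis
    by (simp add: invertible_left_inverse matrix_left_invertible_ker)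
qed

lemma pos_semidef_matrix_inv:
  fixes H :: "real^'d^'d"
  assumes "pos_semidef H" and "invertible H"
  shows "pos_semidef (matrix_inv H)"
proof -
  have "(matrix_inv H *v x) \<bullet> y = x \<bullet> (matrix_inv H *v y)" for x y
    using sym_matD[of H "matrix_inv H *v x" "matrix_inv H *v y"] assms
    by (simp add: pos_semidef_def matrix_inv_cancel_left)
  moreover have "v \<bullet> (matrix_inv H *v v) \<ge> 0" for v
    using assms unfolding pos_semidef_def
    by (metis inner_commute matrix_inv_cancel_left)
  ultimately show ?thesis
    unfolding pos_semidef_def sym_mat_iff_inner by blast
qed

lemma pos_semidef_Cauchy_Schwarz:
  fixes M :: "real^'d^'d"
  assumes "pos_semidef M"
  shows "(x \<bullet> (M *v y))\<^sup>2 \<le> (x \<bullet> (M *v x)) * (y \<bullet> (M *v y))"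
proof -
  define p q s where "p = x \<bullet> (M *v x)" and "q = x \<bullet> (M *v y)" and "s = y \<bullet> (M *v y)"
  have "y \<bullet> (M *v x) = q"
    using assms unfolding q_def pos_semidef_def by (metis inner_commute sym_matD)
  then have quadratic: "0 \<le> p + 2 * t * q + t\<^sup>2 * s" for t
    using assms[unfolded pos_semidef_def, THEN conjunct2, rule_format, of "x + t *\<^sub>R y"]
    by (simp add: p_def q_def s_def power2_eq_square algebra_simps)
  show ?thesis
  proof (cases "s = 0")
    case True
    with quadratic[of "- (p + 1) / (2 * q)"] have "q = 0"
      by (cases "q = 0") (simp_all add: field_simps)
    then show ?thesis using True by (simp add: q_def s_def)
  next
    case False
    then have "s > 0" using assms unfolding s_def pos_semidef_def by (simp add: order_less_le)
    with quadratic[of "- q / s"] have "q\<^sup>2 \<le> p * s"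
      by (simp add: field_simps power2_eq_square)
    then show ?thesis by (simp add: p_def q_def s_def)
  qed
qed

section \<open>Orthonormal eigenbases and the matrix square root\<close>

definition orthonormal_eigvecs :: "real^'d^'d \<Rightarrow> (real^'d) set \<Rightarrow> bool" where
  "orthonormal_eigvecs A E \<longleftrightarrow>
     finite E \<and> pairwise orthogonal E \<and> (\<forall>e\<in>E. norm e = 1 \<and> (\<exists>c. A *v e = c *\<^sub>R e))"

lemma orthonormal_eigvecs_eigenvalue:
  assumes "orthonormal_eigvecs A E" and "e \<in> E"
  shows "A *v e = (e \<bullet> (A *v e)) *\<^sub>R e"
proof -
  obtain c where "A *v e = c *\<^sub>R e" and "norm e = 1"
    using assms unfolding orthonormal_eigvecs_def by blast
  then show ?thesis by (simp add: norm_eq_1)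
qed

lemma orthonormal_eigvecs_nonzero: "orthonormal_eigvecs A E \<Longrightarrow> e \<in> E \<Longrightarrow> e \<noteq> 0"
  unfolding orthonormal_eigvecs_def by force

lemma orthonormal_eigvecs_card_le:
  fixes E :: "(real^'d) set"
  assumes "orthonormal_eigvecs A E"
  shows "card E \<le> CARD('d)"
proof -
  have "independent E"
    using assms unfolding orthonormal_eigvecs_def
    by (intro pairwise_orthogonal_independent) force+
  then show ?thesis using independent_bound by fastforce
qed

lemma quadratic_le_0_imp_linear_coeff_0:
  fixes a c :: real
  assumes "\<And>t. 2 * t * a + t\<^sup>2 * c \<le> 0"
  shows "a = 0"
proof (rule ccontr)
  assume "a \<noteq> 0"
  define k where "k = \<bar>c\<bar> + 1"
  have "k > 0" "2 * k + c > 0" unfolding k_def by (simp_all add: abs_if)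
  then have "a\<^sup>2 * (2 * k + c) / k\<^sup>2 > 0" using \<open>a \<noteq> 0\<close> by simp
  moreover have "2 * (a / k) * a + (a / k)\<^sup>2 * c = a\<^sup>2 * (2 * k + c) / k\<^sup>2"
    using \<open>k > 0\<close> by (simp add: field_simps power2_eq_square)
  ultimately show False using assms[of "a / k"] by linarith
qed

text \<open>Perturbing \<open>u\<close> to the normalisation of \<open>u + t v\<close> gives \<open>2 t a + t\<^sup>2 c \<le> 0\<close> for all \<open>t\<close>,
  where \<open>a = \<langle>A u, v\<rangle>\<close>.\<close>

lemma rayleigh_maximizer_orthogonal:
  fixes A :: "real^'d^'d"
  assumes A: "sym_mat A" and S: "subspace S" and u: "u \<in> S" "norm u = 1"
    and maximal: "\<And>y. y \<in> S \<Longrightarrow> norm y = 1 \<Longrightarrow> y \<bullet> (A *v y) \<le> u \<bullet> (A *v u)"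
    and v: "v \<in> S" "v \<bullet> u = 0"
  shows "(A *v u) \<bullet> v = 0"
proof (rule quadratic_le_0_imp_linear_coeff_0)
  fix t :: real
  define w where "w = u + t *\<^sub>R v"
  define lam where "lam = u \<bullet> (A *v u)"
  have "(norm w)\<^sup>2 = w \<bullet> w" by (simp add: power2_norm_eq_inner)
  also have "\<dots> = 1 + t\<^sup>2 * (v \<bullet> v)"
    using u v by (simp add: w_def inner_add_left inner_add_right inner_commute power2_eq_square
        norm_eq_1)
  finally have norm_w: "(norm w)\<^sup>2 = 1 + t\<^sup>2 * (v \<bullet> v)" .
  then have "(norm w)\<^sup>2 > 0" by (simp add: add_pos_nonneg)
  then have "norm w > 0" by simp
  have "w \<in> S" unfolding w_def using S u v by (simp add: subspace_add subspace_scale)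
  then have "(w /\<^sub>R norm w) \<bullet> (A *v (w /\<^sub>R norm w)) \<le> lam"
    unfolding lam_def using \<open>norm w > 0\<close> S by (intro maximal) (simp_all add: subspace_scale)
  then have "w \<bullet> (A *v w) \<le> lam * (norm w)\<^sup>2"
    using \<open>norm w > 0\<close> by (simp add: matrix_vector_mult_scaleR field_simps power2_eq_square)
  moreover have "w \<bullet> (A *v w) = lam + 2 * t * ((A *v u) \<bullet> v) + t\<^sup>2 * (v \<bullet> (A *v v))"
    using sym_matD[OF A, of v u]
    by (simp add: w_def lam_def inner_commute power2_eq_square algebra_simps)
  ultimately show "2 * t * ((A *v u) \<bullet> v) + t\<^sup>2 * (v \<bullet> (A *v v) - lam * (v \<bullet> v)) \<le> 0"
    using norm_w by (simp add: algebra_simps)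
qed

lemma rayleigh_maximizer_exists:
  fixes A :: "real^'d^'d"
  assumes S: "subspace S" and "x \<in> S" "x \<noteq> 0"
  obtains u where "u \<in> S" "norm u = 1"
    "\<And>y. y \<in> S \<Longrightarrow> norm y = 1 \<Longrightarrow> y \<bullet> (A *v y) \<le> u \<bullet> (A *v u)"
proof -
  define K where "K = S \<inter> sphere 0 1"
  have "compact K"
    unfolding K_def using closed_subspace[OF S] by (simp add: closed_Int_compact)
  moreover have "x /\<^sub>R norm x \<in> K"
    unfolding K_def using assms by (simp add: subspace_scale)
  moreover have "continuous_on K (\<lambda>y. y \<bullet> (A *v y))" by (intro continuous_intros)
  ultimately obtain u where "u \<in> K" "\<And>y. y \<in> K \<Longrightarrow> y \<bullet> (A *v y) \<le> u \<bullet> (A *v u)"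
    using continuous_attains_sup[of K "\<lambda>y. y \<bullet> (A *v y)"] by blast
  then have "u \<in> S" "norm u = 1" "\<And>y. y \<in> S \<Longrightarrow> norm y = 1 \<Longrightarrow> y \<bullet> (A *v y) \<le> u \<bullet> (A *v u)"
    unfolding K_def by auto
  then show ?thesis by (rule that)
qed

lemma sym_mat_orthogonal_to_eigvecs:
  fixes A :: "real^'d^'d"
  assumes A: "sym_mat A" and E: "orthonormal_eigvecs A E" and x: "\<And>e. e \<in> E \<Longrightarrow> e \<bullet> x = 0"
    and "e \<in> E"
  shows "e \<bullet> (A *v x) = 0"
proof -
  obtain c where "A *v e = c *\<^sub>R e"
    using E \<open>e \<in> E\<close> unfolding orthonormal_eigvecs_def by blast
  then show ?thesis using sym_matD[OF A, of e x] x[OF \<open>e \<in> E\<close>] by simp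
qed

lemma orthonormal_eigvecs_extend:
  fixes A :: "real^'d^'d"
  assumes A: "sym_mat A" and E: "orthonormal_eigvecs A E" and span: "span E \<noteq> UNIV"
  obtains u where "u \<notin> E" and "orthonormal_eigvecs A (insert u E)"
proof -
  define S where "S = {x. \<forall>e\<in>E. e \<bullet> x = 0}"
  have S: "subspace S"
    unfolding subspace_def S_def by (simp add: inner_add_right)
  have "dim E < DIM(real^'d)"
    using span by (metis dim_eq_full dim_subset_UNIV le_neq_implies_less)
  then obtain x :: "real^'d" where "x \<noteq> 0" "\<And>y. y \<in> span E \<Longrightarrow> orthogonal x y"
    using orthogonal_to_subspace_exists by blast
  then have "x \<in> S"
    unfolding S_def orthogonal_def by (auto simp: span_base inner_commute)
  then obtain u where u: "u \<in> S" "norm u = 1"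
    and maximal: "\<And>y. y \<in> S \<Longrightarrow> norm y = 1 \<Longrightarrow> y \<bullet> (A *v y) \<le> u \<bullet> (A *v u)"
    using rayleigh_maximizer_exists[OF S _ \<open>x \<noteq> 0\<close>] by blast
  define lam where "lam = u \<bullet> (A *v u)"
  define v where "v = A *v u - lam *\<^sub>R u"
  have "A *v u \<in> S"
    using sym_mat_orthogonal_to_eigvecs[OF A E] u unfolding S_def by blast
  then have "v \<in> S" unfolding v_def using S u by (simp add: subspace_diff subspace_scale)
  moreover have "v \<bullet> u = 0"
    using u by (simp add: v_def lam_def inner_diff_left norm_eq_1) (simp add: inner_commute)
  ultimately have "(A *v u) \<bullet> v = 0"
    using rayleigh_maximizer_orthogonal[OF A S u maximal] by blast
  then have "v \<bullet> v = 0"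
    using \<open>v \<bullet> u = 0\<close> by (simp add: v_def inner_diff_left inner_commute)
  then have Au: "A *v u = lam *\<^sub>R u" by (simp add: v_def)
  have "u \<notin> E"
  proof
    assume "u \<in> E"
    then have "u \<bullet> u = 0" using u unfolding S_def by blast
    then show False using u by (simp add: norm_eq_1)
  qed
  moreover have "orthonormal_eigvecs A (insert u E)"
    using E u Au unfolding orthonormal_eigvecs_def S_def pairwise_insert orthogonal_def
    by (auto simp: inner_commute)
  ultimately show ?thesis using that by blast
qed

lemma sym_mat_orthonormal_eigenbasis:
  fixes A :: "real^'d^'d"
  assumes "sym_mat A"
  obtains E where "orthonormal_eigvecs A E" and "span E = UNIV"
proof -
  define has_card where "has_card k \<longleftrightarrow> (\<exists>E. orthonormal_eigvecs A E \<and> card E = k)" for k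
  have "has_card 0" unfolding has_card_def orthonormal_eigvecs_def by (intro exI[of _ "{}"]) simp
  moreover have "has_card k \<Longrightarrow> k \<le> CARD('d)" for k
    unfolding has_card_def using orthonormal_eigvecs_card_le by blast
  ultimately obtain k where k: "has_card k" and greatest: "\<And>k'. has_card k' \<Longrightarrow> k' \<le> k"
    using Nat.ex_has_greatest_nat[of has_card 0 "CARD('d)"] by blast
  then obtain E where E: "orthonormal_eigvecs A E" "card E = k" unfolding has_card_def by blast
  have "span E = UNIV"
  proof (rule ccontr)
    assume "span E \<noteq> UNIV"
    then obtain u where "u \<notin> E" "orthonormal_eigvecs A (insert u E)"
      using orthonormal_eigvecs_extend[OF assms E(1)] by blast
    then have "has_card (Suc k)"
      using E unfolding has_card_def orthonormal_eigvecs_def by (metis card_insert_disjoint)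
    then show False using greatest by fastforce
  qed
  then show ?thesis using E that by blast
qed

lemma orthonormal_eigvecs_inner:
  assumes "orthonormal_eigvecs A E" "e \<in> E" "e' \<in> E"
  shows "e \<bullet> e' = (if e = e' then 1 else 0)"
  using assms unfolding orthonormal_eigvecs_def pairwise_def orthogonal_def
  by (auto simp: norm_eq_1)

lemma matrix_eq_on_spanning_set:
  fixes A B :: "real^'n^'m"
  assumes "span E = UNIV" and "\<And>e. e \<in> E \<Longrightarrow> A *v e = B *v e"
  shows "A = B"
  unfolding matrix_eq
  using linear_eq_on_span[OF matrix_vector_mul_linear matrix_vector_mul_linear] assms by blast

text \<open>\<open>S\<close> maps \<open>S e - sqrt c e\<close> to \<open>-sqrt c\<close> times itself, which positive semidefiniteness
  forbids unless it is zero.\<close>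

lemma pos_semidef_sqrt_on_eigenvector:
  fixes S :: "real^'d^'d"
  assumes S: "pos_semidef S" and "S ** S = A" and "A *v e = c *\<^sub>R e" and "c > 0"
  shows "S *v e = sqrt c *\<^sub>R e"
proof -
  define w where "w = S *v e - sqrt c *\<^sub>R e"
  have "S *v w = - sqrt c *\<^sub>R w"
    using assms by (simp add: w_def matrix_vector_mul_assoc algebra_simps)
  moreover have "w \<bullet> (S *v w) \<ge> 0" using S unfolding pos_semidef_def by blast
  ultimately have "w \<bullet> w \<le> 0" using \<open>c > 0\<close> by (simp add: mult_le_0_iff)
  then have "w = 0" using inner_ge_zero[of w] by simp
  then show ?thesis by (simp add: w_def)
qed

lemma pos_def_eigenvalue_pos:
  assumes "pos_def A" and "orthonormal_eigvecs A E" and "e \<in> E"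
  shows "e \<bullet> (A *v e) > 0"
  using assms orthonormal_eigvecs_nonzero unfolding pos_def_def by blast

lemma pos_def_sqrt_unique:
  fixes A :: "real^'d^'d"
  assumes A: "pos_def A"
    and S: "pos_semidef S" "S ** S = A" and S': "pos_semidef S'" "S' ** S' = A"
  shows "S = S'"
proof -
  obtain E where E: "orthonormal_eigvecs A E" and span: "span E = UNIV"
    using sym_mat_orthonormal_eigenbasis A unfolding pos_def_def by blast
  show ?thesis
    using pos_semidef_sqrt_on_eigenvector[OF S orthonormal_eigvecs_eigenvalue[OF E]
        pos_def_eigenvalue_pos[OF A E]]
      pos_semidef_sqrt_on_eigenvector[OF S' orthonormal_eigvecs_eigenvalue[OF E]
        pos_def_eigenvalue_pos[OF A E]]
    by (intro matrix_eq_on_spanning_set[OF span]) simp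
qed

lemma pos_def_sqrt_exists:
  fixes A :: "real^'d^'d"
  assumes A: "pos_def A"
  obtains R where "pos_semidef R" and "R ** R = A"
proof -
  obtain E where E: "orthonormal_eigvecs A E" and span: "span E = UNIV"
    using sym_mat_orthonormal_eigenbasis A unfolding pos_def_def by blast
  have fin: "finite E" using E unfolding orthonormal_eigvecs_def by blast
  define lam where "lam e = e \<bullet> (A *v e)" for e
  have Ae: "A *v e = lam e *\<^sub>R e" and lam_pos: "lam e > 0" if "e \<in> E" for e
    using orthonormal_eigvecs_eigenvalue[OF E that] pos_def_eigenvalue_pos[OF A E that]
    by (simp_all add: lam_def)
  define R where "R = matrix (\<lambda>x. \<Sum>e\<in>E. (sqrt (lam e) * (e \<bullet> x)) *\<^sub>R e)"
  have R: "R *v x = (\<Sum>e\<in>E. (sqrt (lam e) * (e \<bullet> x)) *\<^sub>R e)" for x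
  proof -
    have "linear (\<lambda>x. \<Sum>e\<in>E. (sqrt (lam e) * (e \<bullet> x)) *\<^sub>R e)"
      by (rule linearI) (simp_all add: algebra_simps sum.distrib scaleR_sum_right)
    then show ?thesis unfolding R_def by (simp add: matrix_works)
  qed
  have R_on_E: "R *v e' = sqrt (lam e') *\<^sub>R e'" if "e' \<in> E" for e'
  proof -
    have "R *v e' = (\<Sum>e\<in>E. if e = e' then sqrt (lam e') *\<^sub>R e' else 0)"
      unfolding R by (intro sum.cong refl) (simp add: orthonormal_eigvecs_inner[OF E _ that])
    then show ?thesis using fin that by simp
  qed
  have "(R *v x) \<bullet> y = x \<bullet> (R *v y)" for x y
    by (simp add: R inner_sum_left inner_sum_right inner_commute algebra_simps)
  moreover have "x \<bullet> (R *v x) = (\<Sum>e\<in>E. sqrt (lam e) * (e \<bullet> x)\<^sup>2)" for x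
    by (simp add: R inner_sum_right inner_commute power2_eq_square algebra_simps)
  then have "x \<bullet> (R *v x) \<ge> 0" for x
    using lam_pos by (simp add: sum_nonneg less_imp_le)
  ultimately have "pos_semidef R"
    unfolding pos_semidef_def sym_mat_iff_inner by blast
  moreover have "R ** R = A"
    using lam_pos by (intro matrix_eq_on_spanning_set[OF span])
      (simp add: matrix_vector_mul_assoc[symmetric] R_on_E matrix_vector_mult_scaleR Ae abs_of_pos)
  ultimately show ?thesis by (rule that)
qed

lemma pos_def_mat_sqrt:
  fixes A :: "real^'d^'d"
  assumes "pos_def A"
  shows "pos_semidef (mat_sqrt A)" and "mat_sqrt A ** mat_sqrt A = A"
proof -
  obtain R where "pos_semidef R" "R ** R = A" using pos_def_sqrt_exists[OF assms] .
  then have "mat_sqrt A = R"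
    unfolding mat_sqrt_def using pos_def_sqrt_unique[OF assms] by blast
  then show "pos_semidef (mat_sqrt A)" "mat_sqrt A ** mat_sqrt A = A"
    using \<open>pos_semidef R\<close> \<open>R ** R = A\<close> by simp_all
qed

section \<open>Gradients, Hessians and convexity\<close>

lemma has_derivative_grad:
  fixes f :: "real^'d \<Rightarrow> real"
  assumes "f differentiable (at x)"
  shows "(f has_derivative (\<lambda>v. grad f x \<bullet> v)) (at x)"
proof -
  define F where "F = frechet_derivative f (at x)"
  have F: "(f has_derivative F) (at x)" using assms frechet_derivative_works F_def by blast
  have "F v = grad f x \<bullet> v" for v
  proof -
    have "F v = F (\<Sum>i\<in>UNIV. v$i *\<^sub>R axis i 1)"
      using basis_expansion[of v] by (simp add: scalar_mult_eq_scaleR)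
    also have "\<dots> = (\<Sum>i\<in>UNIV. v$i * F (axis i 1))"
      using has_derivative_linear[OF F] by (simp add: linear_sum linear_scale)
    also have "\<dots> = grad f x \<bullet> v"
      unfolding grad_def F_def inner_vec_def by (simp add: mult.commute)
    finally show ?thesis .
  qed
  then show ?thesis using F by (metis ext)
qed

lemma grad_eqI:
  fixes f :: "real^'d \<Rightarrow> real"
  assumes "(f has_derivative (\<lambda>v. c \<bullet> v)) (at x)"
  shows "grad f x = c"
  using frechet_derivative_at[OF assms, symmetric] unfolding grad_def by (simp add: vec_eq_iff inner_axis)

lemma has_derivative_hess:
  fixes f :: "real^'d \<Rightarrow> real"
  assumes "grad f differentiable (at x)"
  shows "(grad f has_derivative (\<lambda>v. hess f x *v v)) (at x)"
  using assms unfolding hess_def by (simp add: jacobian_works)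

lemma C2_sum_differentiable:
  fixes l :: "'i \<Rightarrow> real^'d \<Rightarrow> real"
  assumes "finite I" and C2: "\<And>i. i \<in> I \<Longrightarrow> C2 (l i)"
  shows "(\<lambda>x. \<Sum>i\<in>I. l i x) differentiable (at x)"
    and "grad (\<lambda>x. \<Sum>i\<in>I. l i x) differentiable (at x)"
proof -
  have l: "l i differentiable (at y)" "grad (l i) differentiable (at y)" if "i \<in> I" for i y
    using C2[OF that] unfolding C2_def by blast+
  then show "(\<lambda>x. \<Sum>i\<in>I. l i x) differentiable (at x)" using \<open>finite I\<close> by simp
  have "((\<lambda>x. \<Sum>i\<in>I. l i x) has_derivative (\<lambda>v. \<Sum>i\<in>I. grad (l i) y \<bullet> v)) (at y)" for y
    by (intro has_derivative_sum has_derivative_grad l)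
  then have "grad (\<lambda>x. \<Sum>i\<in>I. l i x) = (\<lambda>y. \<Sum>i\<in>I. grad (l i) y)"
    by (intro ext grad_eqI) (simp add: inner_sum_left)
  then show "grad (\<lambda>x. \<Sum>i\<in>I. l i x) differentiable (at x)"
    using l \<open>finite I\<close> by simp
qed

lemma has_real_derivative_along_line:
  assumes "(F has_derivative F') (at (a + s *\<^sub>R h))"
  shows "((\<lambda>s. F (a + s *\<^sub>R h)) has_real_derivative F' h) (at s)"
proof -
  have "((\<lambda>s. a + s *\<^sub>R h) has_derivative (\<lambda>t. t *\<^sub>R h)) (at s)"
    by (auto intro!: derivative_eq_intros)
  from has_derivative_compose[OF this assms]
  have "((\<lambda>s. F (a + s *\<^sub>R h)) has_derivative (\<lambda>t. F' (t *\<^sub>R h))) (at s)" .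
  moreover have "(\<lambda>t. F' (t *\<^sub>R h)) = (*) (F' h)"
    using linear_scale[OF has_derivative_linear[OF assms]] by (auto simp: mult.commute)
  ultimately show ?thesis unfolding has_field_derivative_def by simp
qed

lemma gradient_mean_value:
  fixes G :: "real^'d \<Rightarrow> real^'d"
  assumes "\<And>y. (G has_derivative (\<lambda>v. M y *v v)) (at y)"
  obtains \<xi> where "0 < \<xi>" "\<xi> < 1" "(G (a + h) - G a) \<bullet> e = (M (a + \<xi> *\<^sub>R h) *v h) \<bullet> e"
proof -
  have "((\<lambda>y. G y \<bullet> e) has_derivative (\<lambda>v. (M y *v v) \<bullet> e)) (at y)" for y
    by (rule has_derivative_inner_left[OF assms])
  from MVT2[OF zero_less_one, of "\<lambda>s. G (a + s *\<^sub>R h) \<bullet> e" "\<lambda>s. (M (a + s *\<^sub>R h) *v h) \<bullet> e",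
      OF has_real_derivative_along_line[OF this]]
  obtain \<xi> where "0 < \<xi>" "\<xi> < 1"
    "G (a + 1 *\<^sub>R h) \<bullet> e - G (a + 0 *\<^sub>R h) \<bullet> e = (1 - 0) * ((M (a + \<xi> *\<^sub>R h) *v h) \<bullet> e)"
    by blast
  then show ?thesis using that by (simp add: inner_diff_left)
qed

definition second_difference :: "('a::real_vector \<Rightarrow> real) \<Rightarrow> 'a \<Rightarrow> 'a \<Rightarrow> 'a \<Rightarrow> real \<Rightarrow> real" where
  "second_difference f x h k t = f (x + t *\<^sub>R h + t *\<^sub>R k) - f (x + t *\<^sub>R h) - f (x + t *\<^sub>R k) + f x"

lemma second_difference_commute: "second_difference f x h k t = second_difference f x k h t"
  unfolding second_difference_def by (simp add: add_ac)

lemma second_difference_mean_value: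
  fixes f :: "real^'d \<Rightarrow> real"
  assumes df: "\<And>y. (f has_derivative (\<lambda>v. G y \<bullet> v)) (at y)" and "t > 0"
  obtains \<xi> where "0 < \<xi>" "\<xi> < t"
    "second_difference f x h k t = t * ((G (x + t *\<^sub>R k + \<xi> *\<^sub>R h) - G (x + \<xi> *\<^sub>R h)) \<bullet> h)"
proof -
  define \<phi> where "\<phi> s = f (x + t *\<^sub>R k + s *\<^sub>R h) - f (x + s *\<^sub>R h)" for s
  have der: "(\<phi> has_real_derivative (G (x + t *\<^sub>R k + s *\<^sub>R h) - G (x + s *\<^sub>R h)) \<bullet> h) (at s)" for s
    unfolding \<phi>_def inner_diff_left
    by (intro DERIV_diff has_real_derivative_along_line df)
  obtain \<xi> where "0 < \<xi>" "\<xi> < t"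
    "\<phi> t - \<phi> 0 = (t - 0) * ((G (x + t *\<^sub>R k + \<xi> *\<^sub>R h) - G (x + \<xi> *\<^sub>R h)) \<bullet> h)"
    using MVT2[OF \<open>t > 0\<close>, of \<phi>, OF der] by blast
  moreover have "\<phi> t - \<phi> 0 = second_difference f x h k t"
    unfolding \<phi>_def second_difference_def by (simp add: algebra_simps)
  ultimately show ?thesis using that by simp
qed

lemma second_difference_linearization:
  fixes f :: "real^'d \<Rightarrow> real" and x :: "real^'d" and M :: "real^'d^'d"
  assumes df: "\<And>y. (f has_derivative (\<lambda>v. G y \<bullet> v)) (at y)" and "t > 0"
  defines "r y \<equiv> G y - G x - M *v (y - x)"
  obtains y\<^sub>1 y\<^sub>2 where "norm (y\<^sub>1 - x) \<le> t * (norm h + norm k)" "norm (y\<^sub>2 - x) \<le> t * (norm h + norm k)"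
    "second_difference f x h k t - t\<^sup>2 * ((M *v k) \<bullet> h) = t * ((r y\<^sub>1 - r y\<^sub>2) \<bullet> h)"
proof -
  obtain \<xi> where \<xi>: "0 < \<xi>" "\<xi> < t" and
    mv: "second_difference f x h k t = t * ((G (x + t *\<^sub>R k + \<xi> *\<^sub>R h) - G (x + \<xi> *\<^sub>R h)) \<bullet> h)"
    using second_difference_mean_value[OF df \<open>t > 0\<close>] by blast
  define y\<^sub>1 y\<^sub>2 where "y\<^sub>1 = x + t *\<^sub>R k + \<xi> *\<^sub>R h" and "y\<^sub>2 = x + \<xi> *\<^sub>R h"
  have Gdiff: "G y\<^sub>1 - G y\<^sub>2 = t *\<^sub>R (M *v k) + (r y\<^sub>1 - r y\<^sub>2)"
    by (simp add: r_def y\<^sub>1_def y\<^sub>2_def algebra_simps)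
  have "second_difference f x h k t - t\<^sup>2 * ((M *v k) \<bullet> h) = t * ((r y\<^sub>1 - r y\<^sub>2) \<bullet> h)"
    unfolding mv y\<^sub>1_def[symmetric] y\<^sub>2_def[symmetric] Gdiff
    by (simp add: power2_eq_square algebra_simps)
  moreover have "\<xi> * norm h \<le> t * norm h" "t * norm h \<le> t * (norm h + norm k)"
    "t * norm k \<le> t * (norm h + norm k)"
    using \<xi> by (simp_all add: mult_right_mono)
  moreover have "norm (y\<^sub>1 - x) \<le> t * norm k + \<xi> * norm h"
    using \<xi> \<open>t > 0\<close> norm_triangle_ineq[of "t *\<^sub>R k" "\<xi> *\<^sub>R h"] by (simp add: y\<^sub>1_def)
  moreover have "norm (y\<^sub>2 - x) = \<xi> * norm h" using \<xi> by (simp add: y\<^sub>2_def)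
  ultimately show ?thesis
    using that[of y\<^sub>1 y\<^sub>2] by (simp add: distrib_left)
qed

lemma second_difference_estimate:
  fixes f :: "real^'d \<Rightarrow> real"
  assumes df: "\<And>y. (f has_derivative (\<lambda>v. G y \<bullet> v)) (at y)"
    and dG: "(G has_derivative (\<lambda>v. M *v v)) (at x)" and "\<epsilon> > 0"
  obtains \<delta> where "\<delta> > 0"
    "\<And>t. 0 < t \<Longrightarrow> t < \<delta> \<Longrightarrow>
       \<bar>second_difference f x h k t - t\<^sup>2 * ((M *v k) \<bullet> h)\<bar> \<le> \<epsilon> * t\<^sup>2"
proof -
  define N where "N = norm h + norm k"
  define r where "r y = G y - G x - M *v (y - x)" for y
  define \<epsilon>' where "\<epsilon>' = \<epsilon> / (2 * N\<^sup>2 + 1)"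
  have "N \<ge> 0" "\<epsilon>' > 0" "2 * \<epsilon>' * N\<^sup>2 \<le> \<epsilon>"
    using \<open>\<epsilon> > 0\<close> by (simp_all add: N_def \<epsilon>'_def field_simps add_pos_nonneg)
  then obtain d where "d > 0" and lin: "\<And>y. norm (y - x) < d \<Longrightarrow> norm (r y) \<le> \<epsilon>' * norm (y - x)"
    using dG unfolding has_derivative_at_alt r_def by blast
  define \<delta> where "\<delta> = d / (N + 1)"
  have "\<delta> > 0" using \<open>d > 0\<close> \<open>N \<ge> 0\<close> by (simp add: \<delta>_def)
  moreover have "\<bar>second_difference f x h k t - t\<^sup>2 * ((M *v k) \<bullet> h)\<bar> \<le> \<epsilon> * t\<^sup>2"
    if t: "0 < t" "t < \<delta>" for t
  proof -
    obtain y\<^sub>1 y\<^sub>2 where y: "norm (y\<^sub>1 - x) \<le> t * N" "norm (y\<^sub>2 - x) \<le> t * N"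
      and eq: "second_difference f x h k t - t\<^sup>2 * ((M *v k) \<bullet> h) = t * ((r y\<^sub>1 - r y\<^sub>2) \<bullet> h)"
      using second_difference_linearization[OF df \<open>t > 0\<close>, where x = x and M = M and h = h and k = k] unfolding N_def r_def by blast
    have "t * (N + 1) < d" using t \<open>N \<ge> 0\<close> by (simp add: \<delta>_def field_simps)
    then have "t * N < d" using t by (simp add: algebra_simps)
    have err: "norm (r y) \<le> \<epsilon>' * (t * N)" if "norm (y - x) \<le> t * N" for y
    proof -
      have "norm (r y) \<le> \<epsilon>' * norm (y - x)" using lin that \<open>t * N < d\<close> by simp
      also have "\<dots> \<le> \<epsilon>' * (t * N)" using that \<open>\<epsilon>' > 0\<close> by simp
      finally show ?thesis .
    qed
    have "norm (r y\<^sub>1 - r y\<^sub>2) \<le> 2 * \<epsilon>' * (t * N)"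
      using err[OF y(1)] err[OF y(2)] norm_triangle_ineq4[of "r y\<^sub>1" "r y\<^sub>2"] by linarith
    then have "norm (r y\<^sub>1 - r y\<^sub>2) * norm h \<le> 2 * \<epsilon>' * (t * N) * N"
      using \<open>\<epsilon>' > 0\<close> \<open>N \<ge> 0\<close> t by (intro mult_mono) (simp_all add: N_def)
    then have "\<bar>(r y\<^sub>1 - r y\<^sub>2) \<bullet> h\<bar> \<le> t * (2 * \<epsilon>' * N\<^sup>2)"
      using Cauchy_Schwarz_ineq2[of "r y\<^sub>1 - r y\<^sub>2" h] by (simp add: power2_eq_square mult_ac)
    also have "\<dots> \<le> t * \<epsilon>"
      using \<open>2 * \<epsilon>' * N\<^sup>2 \<le> \<epsilon>\<close> t by simp
    finally show ?thesis
      unfolding eq using t by (simp add: abs_mult power2_eq_square mult_left_mono mult_ac)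
  qed
  ultimately show ?thesis using that by blast
qed

lemma tendsto_second_difference:
  fixes f :: "real^'d \<Rightarrow> real"
  assumes df: "\<And>y. (f has_derivative (\<lambda>v. G y \<bullet> v)) (at y)"
    and dG: "(G has_derivative (\<lambda>v. M *v v)) (at x)"
  shows "((\<lambda>t. second_difference f x h k t / t\<^sup>2) \<longlongrightarrow> (M *v k) \<bullet> h) (at_right 0)"
  unfolding tendsto_iff eventually_at_right_field
proof (intro allI impI)
  fix \<epsilon> :: real
  assume "\<epsilon> > 0"
  then obtain \<delta> where "\<delta> > 0" and \<delta>:
    "\<And>t. 0 < t \<Longrightarrow> t < \<delta> \<Longrightarrow>
       \<bar>second_difference f x h k t - t\<^sup>2 * ((M *v k) \<bullet> h)\<bar> \<le> \<epsilon> / 2 * t\<^sup>2"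
    using second_difference_estimate[OF df dG, of "\<epsilon> / 2"] by auto
  have "dist (second_difference f x h k t / t\<^sup>2) ((M *v k) \<bullet> h) < \<epsilon>" if "0 < t" "t < \<delta>" for t
  proof -
    have "dist (second_difference f x h k t / t\<^sup>2) ((M *v k) \<bullet> h)
        = \<bar>second_difference f x h k t - t\<^sup>2 * ((M *v k) \<bullet> h)\<bar> / t\<^sup>2"
      using \<open>0 < t\<close> by (simp add: dist_real_def field_simps)
    also have "\<dots> \<le> \<epsilon> / 2" using \<delta>[OF that] \<open>0 < t\<close> by (simp add: field_simps)
    finally show ?thesis using \<open>\<epsilon> > 0\<close> by linarith
  qed
  then show "\<exists>b>0. \<forall>t>0. t < b \<longrightarrow> dist (second_difference f x h k t / t\<^sup>2) ((M *v k) \<bullet> h) < \<epsilon>"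
    using \<open>\<delta> > 0\<close> by blast
qed

lemma hessian_symmetric:
  fixes f :: "real^'d \<Rightarrow> real"
  assumes "\<And>y. (f has_derivative (\<lambda>v. G y \<bullet> v)) (at y)"
    and "(G has_derivative (\<lambda>v. M *v v)) (at x)"
  shows "sym_mat M"
  unfolding sym_mat_iff_inner
proof (intro allI)
  fix h k
  have "((\<lambda>t. second_difference f x h k t / t\<^sup>2) \<longlongrightarrow> (M *v k) \<bullet> h) (at_right 0)"
    by (rule tendsto_second_difference[OF assms])
  moreover have "((\<lambda>t. second_difference f x h k t / t\<^sup>2) \<longlongrightarrow> (M *v h) \<bullet> k) (at_right 0)"
    using tendsto_second_difference[OF assms, of k h] unfolding second_difference_commute[of f x k h] .
  ultimately have "(M *v k) \<bullet> h = (M *v h) \<bullet> k"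
    by (rule tendsto_unique[OF trivial_limit_at_right_real])
  then show "(M *v h) \<bullet> k = h \<bullet> (M *v k)" by (simp add: inner_commute)
qed

lemma convex_on_along_line:
  assumes "convex_on UNIV f"
  shows "convex_on UNIV (\<lambda>s. f (x + s *\<^sub>R h))"
proof (rule convex_onI)
  fix t a b :: real
  assume "0 < t" "t < 1"
  have "x + ((1 - t) * a + t * b) *\<^sub>R h = (1 - t) *\<^sub>R (x + a *\<^sub>R h) + t *\<^sub>R (x + b *\<^sub>R h)"
    by (simp add: algebra_simps)
  then show "f (x + ((1 - t) *\<^sub>R a + t *\<^sub>R b) *\<^sub>R h) \<le> (1 - t) * f (x + a *\<^sub>R h) + t * f (x + b *\<^sub>R h)"
    using convex_onD[OF assms, of t] \<open>0 < t\<close> \<open>t < 1\<close> by simp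
qed simp

lemma convex_on_grad_inequality:
  fixes f :: "real^'d \<Rightarrow> real"
  assumes "convex_on UNIV f" and "(f has_derivative (\<lambda>v. G x \<bullet> v)) (at x)"
  shows "f y - f x \<ge> G x \<bullet> (y - x)"
proof -
  have "(f has_derivative (\<lambda>v. G x \<bullet> v)) (at (x + 0 *\<^sub>R (y - x)))" using assms(2) by simp
  from has_real_derivative_along_line[OF this]
  have der: "((\<lambda>s. f (x + s *\<^sub>R (y - x))) has_real_derivative G x \<bullet> (y - x)) (at 0)" .
  have "f (x + 1 *\<^sub>R (y - x)) - f (x + 0 *\<^sub>R (y - x)) \<ge> (G x \<bullet> (y - x)) * (1 - 0)"
    by (rule convex_on_imp_above_tangent[OF convex_on_along_line[OF assms(1)]]) (use der in auto)
  then show ?thesis by simp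
qed

lemma convex_on_grad_monotone:
  fixes f :: "real^'d \<Rightarrow> real"
  assumes "convex_on UNIV f" and "\<And>x. (f has_derivative (\<lambda>v. G x \<bullet> v)) (at x)"
  shows "(G y - G x) \<bullet> (y - x) \<ge> 0"
  using convex_on_grad_inequality[where G = G and x = x and y = y, OF assms]
    convex_on_grad_inequality[where G = G and x = y and y = x, OF assms]
  by (simp add: algebra_simps)

lemma monotone_imp_jacobian_nonneg:
  fixes G :: "real^'d \<Rightarrow> real^'d"
  assumes mono: "\<And>x y. (G y - G x) \<bullet> (y - x) \<ge> 0"
    and dG: "(G has_derivative (\<lambda>v. M *v v)) (at x)"
  shows "v \<bullet> (M *v v) \<ge> 0"
proof (rule ccontr)
  assume "\<not> v \<bullet> (M *v v) \<ge> 0"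
  define \<psi> where "\<psi> s = G (x + s *\<^sub>R v) \<bullet> v" for s
  have "(\<psi> has_real_derivative (M *v v) \<bullet> v) (at 0)"
    unfolding \<psi>_def using has_derivative_inner_left[OF dG, of v]
    by (intro has_real_derivative_along_line) simp
  then obtain d where "d > 0" and "\<And>s. 0 < s \<Longrightarrow> s < d \<Longrightarrow> \<psi> s < \<psi> 0"
    using DERIV_neg_dec_right \<open>\<not> v \<bullet> (M *v v) \<ge> 0\<close> by (metis add_0 inner_commute not_le)
  then have "\<psi> (d / 2) < \<psi> 0" by simp
  moreover have "(d / 2) * (\<psi> (d / 2) - \<psi> 0) \<ge> 0"
    using mono[of x "x + (d / 2) *\<^sub>R v"] by (simp add: \<psi>_def inner_diff_left right_diff_distrib)
  ultimately show False using \<open>d > 0\<close> by (simp add: zero_le_mult_iff)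
qed

section \<open>Quadratic-form estimates\<close>

lemma mnorm_scaleR: "mnorm M (c *\<^sub>R v) = \<bar>c\<bar> * mnorm M v"
proof -
  have "(c *\<^sub>R v) \<bullet> (M *v (c *\<^sub>R v)) = c\<^sup>2 * (v \<bullet> (M *v v))"
    by (simp add: matrix_vector_mult_scaleR power2_eq_square)
  then show ?thesis by (simp add: mnorm_def real_sqrt_mult)
qed

lemma mnorm_squared:
  assumes "pos_semidef M"
  shows "(mnorm M v)\<^sup>2 = v \<bullet> (M *v v)"
  using assms unfolding mnorm_def pos_semidef_def by simp

lemma mnorm_nonneg:
  assumes "pos_semidef M"
  shows "mnorm M v \<ge> 0"
  using assms unfolding mnorm_def pos_semidef_def by simp

lemma op_norm_nonneg: "op_norm A \<ge> 0"
  unfolding op_norm_def by (rule onorm_pos_le[OF matrix_vector_mul_bounded_linear])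

lemma inner_le_op_norm:
  fixes A :: "real^'d^'d"
  shows "x \<bullet> (A *v x) \<le> op_norm A * (norm x)\<^sup>2"
proof -
  have "x \<bullet> (A *v x) \<le> norm x * norm (A *v x)" by (rule norm_cauchy_schwarz)
  also have "\<dots> \<le> norm x * (op_norm A * norm x)"
    unfolding op_norm_def
    by (intro mult_left_mono onorm[OF matrix_vector_mul_bounded_linear]) simp
  finally show ?thesis by (simp add: power2_eq_square mult_ac)
qed

lemma inner_le_mnorm_mult:
  fixes S :: "real^'d^'d"
  assumes S: "pos_def S"
  shows "\<bar>w \<bullet> e\<bar> \<le> mnorm (matrix_inv S) w * mnorm S e"
proof -
  have inv: "invertible S" by (rule pos_def_invertible[OF S])
  have psd: "pos_semidef S" by (rule pos_def_imp_pos_semidef[OF S])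
  define S' where "S' = matrix_inv S"
  have psd': "pos_semidef S'"
    unfolding S'_def by (rule pos_semidef_matrix_inv[OF psd inv])
  have S'S: "S' *v (S *v x) = x" for x
    by (simp add: S'_def matrix_inv_cancel_right[OF inv])
  have "(w \<bullet> e)\<^sup>2 = (w \<bullet> (S' *v (S *v e)))\<^sup>2"
    by (simp add: S'S)
  also have "\<dots> \<le> (w \<bullet> (S' *v w)) * ((S *v e) \<bullet> (S' *v (S *v e)))"
    by (rule pos_semidef_Cauchy_Schwarz[OF psd'])
  also have "\<dots> = (mnorm S' w * mnorm S e)\<^sup>2"
    by (simp add: power_mult_distrib mnorm_squared[OF psd] mnorm_squared[OF psd'] S'S
        inner_commute)
  finally show ?thesis
    unfolding S'_def[symmetric]
    using psd psd' by (simp add: power2_le_iff_abs_le mnorm_def pos_semidef_def)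
qed

text \<open>Cauchy--Schwarz for the form of \<open>H\<^sup>-\<^sup>1\<close>, applied to \<open>R\<^sup>2 e\<close> and \<open>H e\<close>, gives
  \<open>q\<^sup>2 \<le> (C q) p\<close> for \<open>q = \<langle>e, R\<^sup>2 e\<rangle>\<close> and \<open>p = \<langle>e, H e\<rangle>\<close>.\<close>

lemma quadratic_form_le_of_op_norm_inverse:
  fixes H R :: "real^'d^'d"
  assumes H: "pos_semidef H" "invertible H" and R: "sym_mat R"
    and C: "op_norm (R ** matrix_inv H ** R) \<le> C"
  shows "e \<bullet> ((R ** R) *v e) \<le> C * (e \<bullet> (H *v e))"
proof -
  define H' where "H' = matrix_inv H"
  have psd': "pos_semidef H'" unfolding H'_def by (rule pos_semidef_matrix_inv[OF H])
  have H'H: "H' *v (H *v x) = x" for x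
    by (simp add: H'_def matrix_inv_cancel_right[OF H(2)])
  define y z where "y = R *v e" and "z = R *v y"
  define q p where "q = e \<bullet> ((R ** R) *v e)" and "p = e \<bullet> (H *v e)"
  have q: "q = (norm y)\<^sup>2"
    using sym_matD[OF R, of e y] by (simp add: q_def y_def matrix_vector_mul_assoc[symmetric]
        power2_norm_eq_inner)
  have "p \<ge> 0" "q \<ge> 0" using H(1) by (simp_all add: p_def q pos_semidef_def)
  have "C \<ge> 0" using C op_norm_nonneg by (rule order_trans[rotated])
  have "z \<bullet> (H' *v (H *v e)) = q"
    unfolding H'H by (simp add: q_def z_def y_def matrix_vector_mul_assoc inner_commute)
  moreover have "(H *v e) \<bullet> (H' *v (H *v e)) = p"
    unfolding H'H by (simp add: p_def inner_commute)
  ultimately have "q\<^sup>2 \<le> (z \<bullet> (H' *v z)) * p"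
    using pos_semidef_Cauchy_Schwarz[OF psd', of z "H *v e"] by simp
  also have "\<dots> \<le> (C * q) * p"
  proof (rule mult_right_mono[OF _ \<open>p \<ge> 0\<close>])
    have "z \<bullet> (H' *v z) = y \<bullet> ((R ** H' ** R) *v y)"
      using sym_matD[OF R] by (simp add: z_def matrix_vector_mul_assoc[symmetric])
    also have "\<dots> \<le> op_norm (R ** H' ** R) * (norm y)\<^sup>2" by (rule inner_le_op_norm)
    also have "\<dots> \<le> C * q" unfolding q H'_def using C by (simp add: mult_right_mono)
    finally show "z \<bullet> (H' *v z) \<le> C * q" .
  qed
  finally have "q * q \<le> q * (C * p)" by (simp add: power2_eq_square mult_ac)
  then have "q \<le> C * p"
    using \<open>q \<ge> 0\<close> \<open>C \<ge> 0\<close> \<open>p \<ge> 0\<close> by (cases "q = 0") (simp_all add: mult_le_cancel_left_pos)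
  then show ?thesis by (simp add: p_def q_def)
qed

section \<open>Zeros of the gradient near the Newton step\<close>

lemma newton_step_grad_lower_bound:
  fixes G :: "real^'d \<Rightarrow> real^'d" and M :: "real^'d \<Rightarrow> real^'d^'d"
  assumes dG: "\<And>y. (G has_derivative (\<lambda>v. M y *v v)) (at y)"
    and \<Sigma>: "pos_def \<Sigma>" and inv: "invertible (M \<theta>\<^sub>0)"
    and \<theta>\<^sub>1: "\<theta>\<^sub>1 = \<theta>\<^sub>0 - matrix_inv (M \<theta>\<^sub>0) *v G \<theta>\<^sub>0"
    and drift: "\<And>\<theta>. \<theta> \<in> closed_segment \<theta>\<^sub>0 \<theta>\<^sub>1 \<Longrightarrow>
       mnorm (matrix_inv \<Sigma>) ((M \<theta> - M \<theta>\<^sub>0) *v (matrix_inv (M \<theta>\<^sub>0) *v G \<theta>\<^sub>0)) \<le> C\<^sub>h"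
  shows "G \<theta>\<^sub>1 \<bullet> e \<ge> - C\<^sub>h * mnorm \<Sigma> e"
proof -
  define u where "u = matrix_inv (M \<theta>\<^sub>0) *v G \<theta>\<^sub>0"
  have Mu: "M \<theta>\<^sub>0 *v u = G \<theta>\<^sub>0" by (simp add: u_def matrix_inv_cancel_left[OF inv])
  have "\<theta>\<^sub>1 = \<theta>\<^sub>0 + (- u)" by (simp add: \<theta>\<^sub>1 u_def)
  obtain \<xi> where "0 < \<xi>" "\<xi> < 1"
    and mv: "(G (\<theta>\<^sub>0 + (- u)) - G \<theta>\<^sub>0) \<bullet> e = (M (\<theta>\<^sub>0 + \<xi> *\<^sub>R (- u)) *v (- u)) \<bullet> e"
    using gradient_mean_value[OF dG] by blast
  define w where "w = (M (\<theta>\<^sub>0 + \<xi> *\<^sub>R (- u)) - M \<theta>\<^sub>0) *v u"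
  have "G \<theta>\<^sub>1 \<bullet> e = - (w \<bullet> e)"
    using mv Mu unfolding \<open>\<theta>\<^sub>1 = \<theta>\<^sub>0 + (- u)\<close> w_def linear_neg[OF matrix_vector_mul_linear]
    by (simp add: matrix_vector_mult_diff_rdistrib inner_diff_left)
  moreover have "\<theta>\<^sub>0 + \<xi> *\<^sub>R (- u) \<in> closed_segment \<theta>\<^sub>0 \<theta>\<^sub>1"
    using \<open>0 < \<xi>\<close> \<open>\<xi> < 1\<close> unfolding \<open>\<theta>\<^sub>1 = \<theta>\<^sub>0 + (- u)\<close> in_segment
    by (intro exI[of _ \<xi>]) (simp add: algebra_simps)
  then have "\<bar>w \<bullet> e\<bar> \<le> C\<^sub>h * mnorm \<Sigma> e"
    using inner_le_mnorm_mult[OF \<Sigma>, of w e] drift[of "\<theta>\<^sub>0 + \<xi> *\<^sub>R (- u)"]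
      mnorm_nonneg[OF pos_def_imp_pos_semidef[OF \<Sigma>], of e]
    unfolding w_def u_def by (meson mult_right_mono order_trans)
  ultimately show ?thesis by linarith
qed

lemma grad_inner_pos_on_sphere:
  fixes G :: "real^'d \<Rightarrow> real^'d" and M :: "real^'d \<Rightarrow> real^'d^'d"
  assumes dG: "\<And>y. (G has_derivative (\<lambda>v. M y *v v)) (at y)"
    and \<Sigma>: "pos_def \<Sigma>" and inv: "invertible (M \<theta>\<^sub>0)"
    and \<theta>\<^sub>1: "\<theta>\<^sub>1 = \<theta>\<^sub>0 - matrix_inv (M \<theta>\<^sub>0) *v G \<theta>\<^sub>0"
    and curv: "\<And>e v. mnorm \<Sigma> e \<le> r \<Longrightarrow> v \<bullet> (\<Sigma> *v v) \<le> C\<^sub>o\<^sub>p * (v \<bullet> (M (\<theta>\<^sub>1 + e) *v v))"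
    and drift: "\<And>\<theta>. \<theta> \<in> closed_segment \<theta>\<^sub>0 \<theta>\<^sub>1 \<Longrightarrow>
       mnorm (matrix_inv \<Sigma>) ((M \<theta> - M \<theta>\<^sub>0) *v (matrix_inv (M \<theta>\<^sub>0) *v G \<theta>\<^sub>0)) \<le> C\<^sub>h"
    and "C\<^sub>o\<^sub>p \<ge> 0" and "C\<^sub>h * C\<^sub>o\<^sub>p < r" and "r > 0" and e: "mnorm \<Sigma> e = r"
  shows "G (\<theta>\<^sub>1 + e) \<bullet> e > 0"
proof -
  obtain \<xi> where "0 < \<xi>" "\<xi> < 1" and mv: "(G (\<theta>\<^sub>1 + e) - G \<theta>\<^sub>1) \<bullet> e = (M (\<theta>\<^sub>1 + \<xi> *\<^sub>R e) *v e) \<bullet> e"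
    using gradient_mean_value[OF dG] by blast
  define p where "p = e \<bullet> (M (\<theta>\<^sub>1 + \<xi> *\<^sub>R e) *v e)"
  have "mnorm \<Sigma> (\<xi> *\<^sub>R e) \<le> r" using \<open>0 < \<xi>\<close> \<open>\<xi> < 1\<close> e \<open>r > 0\<close> by (simp add: mnorm_scaleR)
  then have "r\<^sup>2 \<le> C\<^sub>o\<^sub>p * p"
    using curv[of "\<xi> *\<^sub>R e" e] e mnorm_squared[OF pos_def_imp_pos_semidef[OF \<Sigma>], of e]
    by (simp add: p_def)
  have "C\<^sub>o\<^sub>p * (C\<^sub>h * r) = (C\<^sub>h * C\<^sub>o\<^sub>p) * r" by (simp add: mult_ac)
  also have "\<dots> < r * r" using \<open>C\<^sub>h * C\<^sub>o\<^sub>p < r\<close> \<open>r > 0\<close> by (rule mult_strict_right_mono)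
  also have "\<dots> \<le> C\<^sub>o\<^sub>p * p" using \<open>r\<^sup>2 \<le> C\<^sub>o\<^sub>p * p\<close> by (simp add: power2_eq_square)
  finally have "C\<^sub>h * r < p" using \<open>C\<^sub>o\<^sub>p \<ge> 0\<close> by (simp add: mult_less_cancel_left)
  moreover have "G \<theta>\<^sub>1 \<bullet> e \<ge> - C\<^sub>h * r"
    using newton_step_grad_lower_bound[OF dG \<Sigma> inv \<theta>\<^sub>1 drift, where e = e] e by simp
  moreover have "G (\<theta>\<^sub>1 + e) \<bullet> e = G \<theta>\<^sub>1 \<bullet> e + p"
    using mv unfolding inner_diff_left p_def by (simp add: inner_commute[of e])
  ultimately show ?thesis by linarith
qed

lemma monotone_zero_in_ellipsoid:
  fixes G :: "real^'d \<Rightarrow> real^'d"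
  assumes mono: "\<And>x y. (G y - G x) \<bullet> (y - x) \<ge> 0"
    and sphere: "\<And>e. mnorm \<Sigma> e = r \<Longrightarrow> G (c + e) \<bullet> e > 0"
    and "r > 0" and "G z = 0"
  shows "mnorm \<Sigma> (z - c) \<le> r"
proof (rule ccontr)
  define m where "m = mnorm \<Sigma> (z - c)"
  assume "\<not> mnorm \<Sigma> (z - c) \<le> r"
  then have "m > r" by (simp add: m_def)
  define t where "t = r / m"
  have "0 < t" "t < 1" using \<open>m > r\<close> \<open>r > 0\<close> by (simp_all add: t_def)
  define e where "e = t *\<^sub>R (z - c)"
  have "mnorm \<Sigma> e = r"
    using \<open>m > r\<close> \<open>r > 0\<close> by (simp add: e_def mnorm_scaleR t_def m_def[symmetric])
  have "z - (c + e) = (1 - t) *\<^sub>R (z - c)"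
    by (simp add: e_def algebra_simps)
  have "0 \<le> (G z - G (c + e)) \<bullet> (z - (c + e))" by (rule mono)
  also have "\<dots> = - ((1 - t) * (G (c + e) \<bullet> (z - c)))"
    unfolding \<open>z - (c + e) = (1 - t) *\<^sub>R (z - c)\<close> \<open>G z = 0\<close> by simp
  finally have "(1 - t) * (G (c + e) \<bullet> (z - c)) \<le> 0" by simp
  then have "G (c + e) \<bullet> (z - c) \<le> 0"
    using \<open>t < 1\<close> by (simp add: mult_le_0_iff)
  moreover have "G (c + e) \<bullet> e = t * (G (c + e) \<bullet> (z - c))"
    by (simp only: e_def inner_scaleR_right)
  moreover have "G (c + e) \<bullet> e > 0" using \<open>mnorm \<Sigma> e = r\<close> by (rule sphere)
  ultimately show False
    using mult_nonneg_nonpos[of t "G (c + e) \<bullet> (z - c)"] \<open>0 < t\<close> by linarith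
qed

theorem mainTheorem3:
  fixes l :: "nat \<Rightarrow> real^'d \<Rightarrow> real"
    and n :: nat and T :: "nat set"
    and \<theta>hat \<theta>T :: "real^'d"
    and \<Sigma> :: "real^'d^'d"
    and r C_op C_h :: real
  defines "L \<equiv> (\<lambda>\<theta>. \<Sum>i\<in>{1..n} - T. l i \<theta>)"
  defines "H \<equiv> hess L \<theta>hat"
  defines "g \<equiv> grad L \<theta>hat"
  defines "\<theta>NS \<equiv> \<theta>hat - matrix_inv H *v g"
  defines "B \<equiv> {\<theta>NS + e | e. mnorm \<Sigma> e \<le> r}"
  assumes C2: "\<And>i. i \<in> {1..n} \<Longrightarrow> C2 (l i)"
    and T_sub: "T \<subseteq> {1..n}"
    and L_convex: "convex_on UNIV L"
    and stat: "(\<Sum>i=1..n. grad (l i) \<theta>hat) = 0"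
    and H_inv: "invertible H"
    and Sigma_pd: "pos_def \<Sigma>"
    and r_pos: "r > 0"
    and cond_i: "\<And>\<theta>. \<theta> \<in> B \<Longrightarrow> invertible (hess L \<theta>) \<and>
         op_norm (mat_sqrt \<Sigma> ** matrix_inv (hess L \<theta>) ** mat_sqrt \<Sigma>) \<le> C_op"
    and cond_ii: "\<And>\<theta>. \<theta> \<in> closed_segment \<theta>hat \<theta>NS \<Longrightarrow>
         mnorm (matrix_inv \<Sigma>) ((hess L \<theta> - H) *v (matrix_inv H *v g)) \<le> C_h"
    and cond_iii: "C_h * C_op < r"
    and crit: "grad L \<theta>T = 0"
  shows "\<theta>T \<in> B"
proof -
  have "L differentiable (at x)" "grad L differentiable (at x)" for x
    using C2_sum_differentiable[of "{1..n} - T" l] C2 unfolding L_def by auto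
  then have dL: "(L has_derivative (\<lambda>v. grad L x \<bullet> v)) (at x)"
    and dG: "(grad L has_derivative (\<lambda>v. hess L x *v v)) (at x)" for x
    by (simp_all add: has_derivative_grad has_derivative_hess)
  have mono: "(grad L y - grad L x) \<bullet> (y - x) \<ge> 0" for x y
    by (rule convex_on_grad_monotone[OF L_convex dL])
  have hess_psd: "pos_semidef (hess L x)" for x
    unfolding pos_semidef_def
    using hessian_symmetric[OF dL dG] monotone_imp_jacobian_nonneg[OF mono dG] by blast
  have curv: "v \<bullet> (\<Sigma> *v v) \<le> C_op * (v \<bullet> (hess L (\<theta>NS + e) *v v))" if "mnorm \<Sigma> e \<le> r" for e v
  proof -
    have "\<theta>NS + e \<in> B" using that unfolding B_def by blast
    then have "invertible (hess L (\<theta>NS + e))"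
      and "op_norm (mat_sqrt \<Sigma> ** matrix_inv (hess L (\<theta>NS + e)) ** mat_sqrt \<Sigma>) \<le> C_op"
      using cond_i by blast+
    from quadratic_form_le_of_op_norm_inverse[OF hess_psd this(1) _ this(2)]
    show ?thesis using pos_def_mat_sqrt[OF Sigma_pd] by (simp add: pos_semidef_def)
  qed
  have "\<theta>NS \<in> B" unfolding B_def using r_pos by (intro CollectI exI[of _ 0]) (simp add: mnorm_def)
  then have "C_op \<ge> 0" using cond_i op_norm_nonneg by (meson order_trans)
  have \<theta>NS: "\<theta>NS = \<theta>hat - matrix_inv (hess L \<theta>hat) *v grad L \<theta>hat"
    unfolding \<theta>NS_def H_def g_def ..
  have "grad L (\<theta>NS + e) \<bullet> e > 0" if "mnorm \<Sigma> e = r" for e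
    using grad_inner_pos_on_sphere[OF dG Sigma_pd H_inv[unfolded H_def] \<theta>NS
        curv cond_ii[unfolded H_def g_def] \<open>C_op \<ge> 0\<close> cond_iii r_pos that] .
  then have "mnorm \<Sigma> (\<theta>T - \<theta>NS) \<le> r"
    using monotone_zero_in_ellipsoid[OF mono _ r_pos crit] by blast
  moreover have "\<theta>T = \<theta>NS + (\<theta>T - \<theta>NS)" by simp
  ultimately show ?thesis unfolding B_def by blast
qed

end
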